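(* Let $\Omega$ be a $\sigma$-compact, locally compact Hausdorff topological space, and let $\mathcal{A}$ be a linear space of continuous real-valued functions on $\Omega$ which contains all constant functions and separates the points of $\Omega$. Then the following conditions are equivalent: (i) for every compact set $K\subset\Omega$ and every constant $C\geq 1$ the set $$\{\omega\in\Omega\mid a(\omega)\leq C\sup_{K}|a| \text{ for all } a\in\mathcal{A}\}$$ is a compact subset of $\Omega$; (ii) there exists a non-negative, continuous, proper function $p\colon\Omega\to[0,\infty)$ such that $p=\sup\{a_\alpha\mid \alpha\in A\}$ pointwise for some symmetric family $(a_\alpha)_{\alpha\in A}$ of functions in $\mathcal{A}$; (iii) there exists a non-negative, proper function $p\colon\Omega\to[0,\infty)$ which is bounded on compact sets and such that $p=\sup\{a_\alpha\mid \alpha\in A\}$ pointwise for some symmetric family $(a_\alpha)_{\alpha\in A}$ of functions in $\mathcal{A}$. Moreover, if these conditions hold, the function $p$ in (ii) can be chosen so that for every compact set $L\subset\Omega$ there are finitely many members $a_{\alpha_1},\dots,a_{\alpha_m}$ of the family with $p=\max\{a_{\alpha_1},\dots,a_{\alpha_m}\}$ on $L$.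
   Context: A function $p\colon\Omega\to Z$ between topological spaces is proper if preimages of compact sets are compact. A family of functions is symmetric if together with each function $a$ it also contains $-a$. For a set $K$ and function $a$, $\sup_K|a|=\sup\{|a(\omega)|\mid\omega\in K\}$. *)

theory Defs
  imports "HOL-Analysis.Analysis"
begin

definition sigma_compact_space :: "'a topology \<Rightarrow> bool" where
  "sigma_compact_space X \<longleftrightarrow>
     (\<exists>\<K>. countable \<K> \<and> (\<forall>K\<in>\<K>. compactin X K) \<and> \<Union>\<K> = topspace X)"

definition proper_fun :: "'a topology \<Rightarrow> ('a \<Rightarrow> real) \<Rightarrow> bool" where
  "proper_fun X p \<longleftrightarrow>
     (\<forall>C. compact C \<longrightarrow> compactin X {x \<in> topspace X. p x \<in> C})"

text \<open>sup over K of |a|, with the convention that it is 0 for empty K.\<close>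
definition sup_abs_on :: "'a set \<Rightarrow> ('a \<Rightarrow> real) \<Rightarrow> real" where
  "sup_abs_on K a = Sup ((\<lambda>x. \<bar>a x\<bar>) ` K \<union> {0})"

definition pointwise_sup :: "'a topology \<Rightarrow> ('a \<Rightarrow> real) set \<Rightarrow> ('a \<Rightarrow> real) \<Rightarrow> bool" where
  "pointwise_sup X F p \<longleftrightarrow>
     (\<forall>x\<in>topspace X. (\<forall>a\<in>F. a x \<le> p x) \<and> (\<forall>b. (\<forall>a\<in>F. a x \<le> b) \<longrightarrow> p x \<le> b))"

definition symmetric_family :: "('a \<Rightarrow> real) set \<Rightarrow> bool" where
  "symmetric_family F \<longleftrightarrow> (\<forall>a\<in>F. (\<lambda>x. - a x) \<in> F)"

end

theory Submission
  imports Defs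
begin

(* Condition (i) yields an exhaustion W 0, W 1, ... of the space by compact sets such that
   W n and its (n+2)-hull lie in the interior of W (n+1).  A point of the compact annulus
   D n = W (n+2) - interior (W (n+1)) lies outside that hull, so some member of the family,
   scaled to have modulus at most 1 on W n, exceeds n there; by compactness finitely many
   such members G n suffice.  The supremum p of 1, -1 and all members of G n and -G n is,
   on W j, the maximum of the finitely many functions chosen before stage j (the later ones
   are bounded by 1 there), hence continuous; and p > n off W (n+1), hence
   proper.  Conversely, if a symmetric family has a proper supremum p bounded by B on K,
   then every member is bounded by B in modulus on K, so the C-hull of K lies in the
   compact set where 0 <= p <= C * B. *)

lemma continuous_map_Max:
  assumes "finite G" "G \<noteq> {}" "\<And>a. a \<in> G \<Longrightarrow> continuous_map X euclideanreal a"
  shows "continuous_map X euclideanreal (\<lambda>x. Max ((\<lambda>a. a x) ` G))"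
  using assms
proof (induction G rule: finite_ne_induct)
  case (singleton b)
  then show ?case by simp
next
  case (insert b G)
  then show ?case by (simp add: continuous_map_real_max)
qed

lemma continuous_map_bounded_on_compactin:
  assumes "continuous_map X euclideanreal p" "compactin X K"
  shows "\<exists>B. \<forall>x\<in>K. \<bar>p x\<bar> \<le> B"
proof -
  have "compact (p ` K)" using image_compactin[OF assms(2,1)] by simp
  then show ?thesis by (auto dest: compact_imp_bounded simp: bounded_real)
qed

lemma bdd_above_sup_abs_on:
  assumes "compactin X K" "continuous_map X euclideanreal a"
  shows "bdd_above ((\<lambda>x. \<bar>a x\<bar>) ` K \<union> {0})"
proof -
  have "compactin euclideanreal ((\<lambda>x. \<bar>a x\<bar>) ` K)"
    by (rule image_compactin[OF assms(1)]) (simp add: continuous_map_real_abs assms(2))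
  then show ?thesis by (simp add: bounded_imp_bdd_above compact_imp_bounded)
qed

lemma abs_le_sup_abs_on:
  assumes "compactin X K" "continuous_map X euclideanreal a" "x \<in> K"
  shows "\<bar>a x\<bar> \<le> sup_abs_on K a"
  unfolding sup_abs_on_def
  by (rule cSup_upper[OF _ bdd_above_sup_abs_on[OF assms(1,2)]]) (use assms(3) in auto)

lemma sup_abs_on_nonneg:
  assumes "compactin X K" "continuous_map X euclideanreal a"
  shows "0 \<le> sup_abs_on K a"
  unfolding sup_abs_on_def
  by (rule cSup_upper[OF _ bdd_above_sup_abs_on[OF assms]]) auto

lemma sup_abs_on_le:
  assumes "0 \<le> B" "\<And>x. x \<in> K \<Longrightarrow> \<bar>a x\<bar> \<le> B"
  shows "sup_abs_on K a \<le> B"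
  unfolding sup_abs_on_def by (rule cSup_least) (auto simp: assms)

definition sup_hull :: "'a topology \<Rightarrow> ('a \<Rightarrow> real) set \<Rightarrow> 'a set \<Rightarrow> real \<Rightarrow> 'a set" where
  "sup_hull X \<A> K C = {\<omega> \<in> topspace X. \<forall>a\<in>\<A>. a \<omega> \<le> C * sup_abs_on K a}"

lemma closedin_sup_hull:
  assumes "\<And>a. a \<in> \<A> \<Longrightarrow> continuous_map X euclideanreal a"
  shows "closedin X (sup_hull X \<A> K C)"
proof -
  define S where "S a = {x \<in> topspace X. a x \<in> {..C * sup_abs_on K a}}" for a
  have "sup_hull X \<A> K C = \<Inter>(insert (topspace X) (S ` \<A>))"
    by (auto simp: sup_hull_def S_def)
  moreover have "closedin X (S a)" if "a \<in> \<A>" for a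
    unfolding S_def using assms[OF that] by (rule closedin_continuous_map_preimage) simp
  then have "closedin X (\<Inter>(insert (topspace X) (S ` \<A>)))"
    by (intro closedin_Inter) auto
  ultimately show ?thesis by argo
qed

lemma abs_le_pointwise_sup:
  assumes "symmetric_family F" "pointwise_sup X F p" "a \<in> F" "x \<in> topspace X"
  shows "\<bar>a x\<bar> \<le> p x"
proof -
  have "(\<lambda>x. - a x) \<in> F" using assms(1,3) unfolding symmetric_family_def by blast
  then have "a x \<le> p x" "- a x \<le> p x"
    using assms(2-4) unfolding pointwise_sup_def by fastforce+
  then show ?thesis by linarith
qed

lemma compactin_sup_hull:
  assumes cont: "\<And>a. a \<in> \<A> \<Longrightarrow> continuous_map X euclideanreal a"
    and F: "F \<subseteq> \<A>" "symmetric_family F" "pointwise_sup X F p"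
    and p: "proper_fun X p" "\<And>x. x \<in> topspace X \<Longrightarrow> 0 \<le> p x"
    and K: "K \<subseteq> topspace X" "\<And>x. x \<in> K \<Longrightarrow> \<bar>p x\<bar> \<le> B"
    and "0 \<le> C"
  shows "compactin X (sup_hull X \<A> K C)"
proof -
  define B' where "B' = max B 0"
  have sup_F: "sup_abs_on K a \<le> B'" if "a \<in> F" for a
    using abs_le_pointwise_sup[OF F(2,3) that] K
    by (intro sup_abs_on_le) (force simp: B'_def)+
  have "sup_hull X \<A> K C \<subseteq> {x \<in> topspace X. p x \<in> {0..C * B'}}"
  proof
    fix \<omega> assume \<omega>: "\<omega> \<in> sup_hull X \<A> K C"
    have "a \<omega> \<le> C * B'" if "a \<in> F" for a
    proof -
      have "a \<omega> \<le> C * sup_abs_on K a" using \<omega> that F(1) by (auto simp: sup_hull_def)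
      also have "\<dots> \<le> C * B'" using sup_F[OF that] \<open>0 \<le> C\<close> by (rule mult_left_mono)
      finally show ?thesis .
    qed
    then show "\<omega> \<in> {x \<in> topspace X. p x \<in> {0..C * B'}}"
      using \<omega> F(3) p(2) by (auto simp: sup_hull_def pointwise_sup_def)
  qed
  moreover have "compactin X {x \<in> topspace X. p x \<in> {0..C * B'}}"
    using p(1) unfolding proper_fun_def by blast
  ultimately show ?thesis using closedin_sup_hull[OF cont] closed_compactin by blast
qed

lemma normalized_function_outside_sup_hull:
  assumes cont: "\<And>a. a \<in> \<A> \<Longrightarrow> continuous_map X euclideanreal a"
    and smult: "\<And>c a. a \<in> \<A> \<Longrightarrow> (\<lambda>x. c * a x) \<in> \<A>"
    and K: "compactin X K" and "0 \<le> C"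
    and \<omega>: "\<omega> \<in> topspace X" "\<omega> \<notin> sup_hull X \<A> K C"
  obtains b where "b \<in> \<A>" "\<And>x. x \<in> K \<Longrightarrow> \<bar>b x\<bar> \<le> 1" "b \<omega> = C"
proof -
  obtain a where a: "a \<in> \<A>" "C * sup_abs_on K a < a \<omega>"
    using \<omega> by (auto simp: sup_hull_def not_le)
  have "0 \<le> C * sup_abs_on K a"
    using sup_abs_on_nonneg[OF K cont[OF a(1)]] \<open>0 \<le> C\<close> by simp
  then have pos: "0 < a \<omega>" using a(2) by linarith
  show ?thesis
  proof
    show "(\<lambda>x. C / a \<omega> * a x) \<in> \<A>" using smult a(1) .
    show "C / a \<omega> * a \<omega> = C" using pos by simp
    fix x assume "x \<in> K"
    have "C * \<bar>a x\<bar> \<le> C * sup_abs_on K a"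
      using abs_le_sup_abs_on[OF K cont[OF a(1)] \<open>x \<in> K\<close>] \<open>0 \<le> C\<close> by (rule mult_left_mono)
    then show "\<bar>C / a \<omega> * a x\<bar> \<le> 1"
      using a(2) pos \<open>0 \<le> C\<close> by (simp add: abs_mult)
  qed
qed

lemma compactin_finite_subfamily_gt:
  assumes D: "compactin X D"
    and wit: "\<And>x. x \<in> D \<Longrightarrow> \<exists>f\<in>S. continuous_map X euclideanreal f \<and> t < f x"
  obtains G where "finite G" "G \<subseteq> S" "\<And>x. x \<in> D \<Longrightarrow> \<exists>f\<in>G. t < f x"
proof -
  obtain f where f: "\<And>x. x \<in> D \<Longrightarrow> f x \<in> S \<and> continuous_map X euclideanreal (f x) \<and> t < f x x"
    using wit by metis
  define U where "U x = {y \<in> topspace X. f x y \<in> {t<..}}" for x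
  have "openin X (U x)" if "x \<in> D" for x
    unfolding U_def using f[OF that] by (intro openin_continuous_map_preimage) (auto simp flip: open_openin)
  then have "openin X V" if "V \<in> U ` D" for V
    using that by blast
  moreover have "D \<subseteq> \<Union>(U ` D)"
    using f compactin_subset_topspace[OF D] by (auto simp: U_def)
  ultimately have "\<exists>\<F>. finite \<F> \<and> \<F> \<subseteq> U ` D \<and> D \<subseteq> \<Union>\<F>"
    by (rule compactinD[OF D])
  then obtain D' where D': "finite D'" "D' \<subseteq> D" "D \<subseteq> \<Union>(U ` D')"
    by (auto simp: ex_finite_subset_image)
  show ?thesis
  proof
    show "finite (f ` D')" "f ` D' \<subseteq> S" using D' f by auto
    show "\<exists>g\<in>f ` D'. t < g x" if "x \<in> D" for x
      using that D'(3) by (auto simp: U_def)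
  qed
qed

lemma finite_separating_family_outside_sup_hull:
  assumes cont: "\<And>a. a \<in> \<A> \<Longrightarrow> continuous_map X euclideanreal a"
    and smult: "\<And>c a. a \<in> \<A> \<Longrightarrow> (\<lambda>x. c * a x) \<in> \<A>"
    and K: "compactin X K" and D: "compactin X D"
    and C: "0 \<le> C" "t < C" and disj: "D \<inter> sup_hull X \<A> K C = {}"
  obtains G where "finite G" "G \<subseteq> \<A>" "\<And>a x. a \<in> G \<Longrightarrow> x \<in> K \<Longrightarrow> \<bar>a x\<bar> \<le> 1"
    "\<And>x. x \<in> D \<Longrightarrow> \<exists>a\<in>G. t < a x"
proof -
  have wit: "\<exists>b\<in>{a \<in> \<A>. \<forall>x\<in>K. \<bar>a x\<bar> \<le> 1}. continuous_map X euclideanreal b \<and> t < b \<omega>"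
    if "\<omega> \<in> D" for \<omega>
  proof -
    have \<omega>: "\<omega> \<in> topspace X" "\<omega> \<notin> sup_hull X \<A> K C"
      using that disj compactin_subset_topspace[OF D] by auto
    obtain b where "b \<in> \<A>" "\<And>x. x \<in> K \<Longrightarrow> \<bar>b x\<bar> \<le> 1" "b \<omega> = C"
      using normalized_function_outside_sup_hull[OF cont smult K C(1) \<omega>] by blast
    then show ?thesis using cont C(2) by auto
  qed
  obtain G where "finite G" "G \<subseteq> {a \<in> \<A>. \<forall>x\<in>K. \<bar>a x\<bar> \<le> 1}" "\<And>x. x \<in> D \<Longrightarrow> \<exists>a\<in>G. t < a x"
    using compactin_finite_subfamily_gt[OF D wit] by blast
  then show ?thesis using that by blast
qed

lemma compactin_subset_incseq_openin:
  assumes L: "compactin X L" and U: "\<And>n. openin X (U n)" "incseq U" "L \<subseteq> (\<Union>n. U n)"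
  obtains n where "L \<subseteq> U n"
proof -
  obtain J where J: "finite J" "L \<subseteq> (\<Union>j\<in>J. U j)"
  proof -
    have "\<exists>\<F>. finite \<F> \<and> \<F> \<subseteq> range U \<and> L \<subseteq> \<Union>\<F>"
      using U(1,3) by (intro compactinD[OF L]) auto
    then show ?thesis using that by (auto simp: ex_finite_subset_image)
  qed
  have "U j \<subseteq> U (Max (insert 0 J))" if "j \<in> J" for j
    using J(1) that by (intro monoD[OF U(2)]) simp
  then show ?thesis using that J(2) by blast
qed

lemma compact_exhaustion:
  assumes sig: "sigma_compact_space X" and lc: "locally_compact_space X"
    and haus: "Hausdorff_space X"
    and E: "\<And>n K. compactin X K \<Longrightarrow> compactin X (E n K)"
  obtains W where "\<And>n. compactin X (W n)"
    "\<And>n. W n \<union> E n (W n) \<subseteq> X interior_of W (Suc n)"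
    "topspace X \<subseteq> (\<Union>n. X interior_of W n)"
proof -
  obtain \<K> where \<K>: "countable \<K>" "\<forall>K\<in>\<K>. compactin X K" "\<Union>\<K> = topspace X"
    using sig unfolding sigma_compact_space_def by (elim exE conjE)
  define Q where "Q = from_nat_into (insert {} \<K>)"
  have Q: "compactin X (Q n)" for n
  proof -
    have "Q n \<in> insert {} \<K>" unfolding Q_def by (rule from_nat_into) simp
    then show ?thesis using \<K>(2) by auto
  qed
  have "range Q = insert {} \<K>" unfolding Q_def using \<K>(1) by simp
  then have Q_cover: "topspace X \<subseteq> (\<Union>n. Q n)" using \<K>(3) by simp
  have "\<exists>L. compactin X L \<and> S \<subseteq> X interior_of L" if "compactin X S" for S
  proof -
    have "\<exists>U L. openin X U \<and> compactin X L \<and> closedin X L \<and> S \<subseteq> U \<and> U \<subseteq> L"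
      using lc that locally_compact_space_compact_closed_compact[OF disjI1[OF haus]] by blast
    then show ?thesis by (meson interior_of_maximal order_trans)
  qed
  then obtain N where N: "\<And>S. compactin X S \<Longrightarrow> compactin X (N S) \<and> S \<subseteq> X interior_of N S"
    by metis
  define W where "W = rec_nat (N (Q 0)) (\<lambda>n V. N (V \<union> Q (Suc n) \<union> E n V))"
  have W_0: "W 0 = N (Q 0)" and W_Suc: "W (Suc n) = N (W n \<union> Q (Suc n) \<union> E n (W n))" for n
    by (simp_all add: W_def)
  have W: "compactin X (W n)" for n
    by (induction n) (simp_all add: W_0 W_Suc N Q E compactin_Un)
  have W_step: "W n \<union> Q (Suc n) \<union> E n (W n) \<subseteq> X interior_of W (Suc n)" for n
    unfolding W_Suc by (intro N[THEN conjunct2] compactin_Un W Q E)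
  show ?thesis
  proof
    show "compactin X (W n)" for n by (rule W)
    show "W n \<union> E n (W n) \<subseteq> X interior_of W (Suc n)" for n
      using W_step by blast
    have "Q n \<subseteq> X interior_of W n" for n
      using N[OF Q, of 0] W_step[of "n - 1"] by (cases n) (auto simp: W_0)
    then show "topspace X \<subseteq> (\<Union>n. X interior_of W n)"
      by (intro order_trans[OF Q_cover UN_mono]) auto
  qed
qed

definition sym_closure :: "('a \<Rightarrow> real) set \<Rightarrow> ('a \<Rightarrow> real) set" where
  "sym_closure G = G \<union> (\<lambda>a x. - a x) ` G"

lemma mem_sym_closure_iff: "a \<in> sym_closure G \<longleftrightarrow> (\<exists>b\<in>G. a = b \<or> a = (\<lambda>x. - b x))"
  unfolding sym_closure_def by auto

lemma symmetric_family_sym_closure: "symmetric_family (sym_closure G)"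
  unfolding symmetric_family_def sym_closure_def by (auto simp: image_iff)

lemma sym_closure_subset:
  assumes "G \<subseteq> \<A>" "\<And>a. a \<in> \<A> \<Longrightarrow> (\<lambda>x. - a x) \<in> \<A>"
  shows "sym_closure G \<subseteq> \<A>"
  using assms unfolding sym_closure_def by auto

lemma sym_closure_mono: "G \<subseteq> H \<Longrightarrow> sym_closure G \<subseteq> sym_closure H"
  unfolding sym_closure_def by auto

lemma finite_sym_closure: "finite G \<Longrightarrow> finite (sym_closure G)"
  unfolding sym_closure_def by simp

lemma Sup_eq_Max_if_dominated:
  fixes F F0 :: "('a \<Rightarrow> real) set"
  assumes "finite F0" "F0 \<noteq> {}" "F0 \<subseteq> F" "\<And>a. a \<in> F \<Longrightarrow> \<exists>b\<in>F0. a x \<le> b x"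
  shows "Sup ((\<lambda>a. a x) ` F) = Max ((\<lambda>a. a x) ` F0)"
proof (rule cSup_eq_maximum)
  show "Max ((\<lambda>a. a x) ` F0) \<in> (\<lambda>a. a x) ` F"
  proof -
    have "Max ((\<lambda>a. a x) ` F0) \<in> (\<lambda>a. a x) ` F0" using assms(1,2) by (intro Max_in) auto
    then show ?thesis using assms(3) by blast
  qed
  show "y \<le> Max ((\<lambda>a. a x) ` F0)" if y: "y \<in> (\<lambda>a. a x) ` F" for y
  proof -
    obtain a b where "a \<in> F" "y = a x" "b \<in> F0" "a x \<le> b x" using y assms(4) by blast
    then show ?thesis using assms(1) by (auto intro: order_trans[OF _ Max_ge])
  qed
qed

lemma proper_fun_if_large_off_compacts:
  assumes p: "continuous_map X euclideanreal p" and W: "\<And>n. compactin X (W n)"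
    and large: "\<And>n x. x \<in> topspace X \<Longrightarrow> x \<notin> W n \<Longrightarrow> real n < p x"
  shows "proper_fun X p"
  unfolding proper_fun_def
proof (intro allI impI)
  fix C :: "real set" assume "compact C"
  then obtain B where B: "\<And>y. y \<in> C \<Longrightarrow> \<bar>y\<bar> \<le> B"
    by (meson bounded_real compact_imp_bounded)
  have "{x \<in> topspace X. p x \<in> C} \<subseteq> W (nat \<lceil>B\<rceil>)"
  proof
    fix x assume x: "x \<in> {x \<in> topspace X. p x \<in> C}"
    then have "\<bar>p x\<bar> \<le> B" using B by blast
    then have "\<not> real (nat \<lceil>B\<rceil>) < p x" by linarith
    then show "x \<in> W (nat \<lceil>B\<rceil>)" using large x by blast
  qed
  moreover have "closedin X {x \<in> topspace X. p x \<in> C}"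
    using \<open>compact C\<close> by (intro closedin_continuous_map_preimage[OF p])
      (simp add: compact_imp_closed flip: closed_closedin)
  ultimately show "compactin X {x \<in> topspace X. p x \<in> C}"
    using closed_compactin[OF W] by blast
qed

lemma sup_of_exhausting_family:
  fixes W :: "nat \<Rightarrow> 'a set" and G :: "nat \<Rightarrow> ('a \<Rightarrow> real) set"
  assumes F_def: "F = sym_closure (insert (\<lambda>x. 1) (\<Union>n. G n))"
    and p_def: "p = (\<lambda>x. Sup ((\<lambda>a. a x) ` F))"
    and W: "mono W" "topspace X \<subseteq> (\<Union>n. X interior_of W n)"
    and G: "\<And>n. finite (G n)" "\<And>n a x. a \<in> G n \<Longrightarrow> x \<in> W n \<Longrightarrow> \<bar>a x\<bar> \<le> 1"
      "\<And>n a. a \<in> G n \<Longrightarrow> continuous_map X euclideanreal a"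
  shows "pointwise_sup X F p"
    and "continuous_map X euclideanreal p"
    and "compactin X L \<Longrightarrow>
           \<exists>G'. finite G' \<and> G' \<noteq> {} \<and> G' \<subseteq> F \<and> (\<forall>x\<in>L. p x = Max ((\<lambda>a. a x) ` G'))"
proof -
  define FF where "FF j = sym_closure (insert (\<lambda>x. 1) (\<Union>m<j. G m))" for j
  have FF_finite: "finite (FF j)" for j
    unfolding FF_def by (simp add: finite_sym_closure G(1))
  have FF_nonempty: "FF j \<noteq> {}" for j
    unfolding FF_def by (simp add: sym_closure_def)
  have FF_subset: "FF j \<subseteq> F" for j
    unfolding FF_def F_def by (intro sym_closure_mono insert_mono UN_mono) auto
  note FF = FF_finite FF_nonempty FF_subset
  have FF_cont: "continuous_map X euclideanreal a" if "a \<in> FF j" for a j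
    using that G(3) by (auto simp: FF_def sym_closure_def)
  have dominated: "\<exists>b\<in>FF j. a x \<le> b x" if a: "a \<in> F" and x: "x \<in> W j" for a x j
  proof (cases "a \<in> FF j")
    case False
    obtain b where b: "b \<in> insert (\<lambda>x. 1) (\<Union>n. G n)" "a = b \<or> a = (\<lambda>x. - b x)"
      using a unfolding F_def mem_sym_closure_iff by blast
    have "\<bar>b x\<bar> \<le> 1"
    proof (cases "b = (\<lambda>x. 1)")
      case False
      then obtain m where m: "b \<in> G m" using b(1) by blast
      have "j \<le> m"
      proof (rule ccontr)
        assume "\<not> j \<le> m"
        then have "b \<in> insert (\<lambda>x. 1) (\<Union>m<j. G m)" using m by auto
        then have "a \<in> FF j" using b(2) unfolding FF_def mem_sym_closure_iff by (rule bexI[where x = b, rotated])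
        then show False using \<open>a \<notin> FF j\<close> by contradiction
      qed
      then have "x \<in> W m" using monoD[OF W(1)] x by blast
      then show ?thesis using G(2)[OF m] by blast
    qed simp
    then have "a x \<le> 1" using b(2) by auto
    moreover have "(\<lambda>x. 1) \<in> FF j" by (simp add: FF_def sym_closure_def)
    ultimately show ?thesis by force
  qed blast
  have p_eq: "p x = Max ((\<lambda>a. a x) ` FF j)" if "x \<in> W j" for x j
    unfolding p_def using FF dominated[OF _ that] by (intro Sup_eq_Max_if_dominated) auto
  have p_attained: "\<exists>b\<in>FF j. p x = b x" if "x \<in> W j" for x j
  proof -
    have "Max ((\<lambda>a. a x) ` FF j) \<in> (\<lambda>a. a x) ` FF j" using FF by (intro Max_in) auto
    then show ?thesis using p_eq[OF that] by auto
  qed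
  have int_W: "x \<in> W j" if "x \<in> X interior_of W j" for x j
    using that interior_of_subset by fast
  have in_W: "\<exists>j. x \<in> X interior_of W j" if "x \<in> topspace X" for x
    using subsetD[OF W(2) that] by simp
  show "pointwise_sup X F p"
    unfolding pointwise_sup_def
  proof (intro ballI conjI allI impI)
    fix x assume "x \<in> topspace X"
    then obtain j where j: "x \<in> W j" using in_W int_W by blast
    show "a x \<le> p x" if "a \<in> F" for a
      using dominated[OF that j] p_eq[OF j] FF by (auto intro: order_trans[OF _ Max_ge])
    show "p x \<le> c" if "\<forall>a\<in>F. a x \<le> c" for c
      using p_attained[OF j] FF(3) that by fastforce
  qed
  show "continuous_map X euclideanreal p"
  proof (rule pasting_lemma)
    show "openin X (X interior_of W j)" for j by simp
    show "continuous_map (subtopology X (X interior_of W j)) euclideanreal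
            (\<lambda>x. Max ((\<lambda>a. a x) ` FF j))" for j
      using FF by (intro continuous_map_from_subtopology continuous_map_Max FF_cont) auto
    show "Max ((\<lambda>a. a x) ` FF i) = Max ((\<lambda>a. a x) ` FF j)"
      if "x \<in> topspace X \<inter> X interior_of W i \<inter> X interior_of W j" for i j x
    proof -
      have "x \<in> W i" "x \<in> W j" using that int_W by auto
      then show ?thesis using p_eq[of x i] p_eq[of x j] by simp
    qed
    show "\<exists>j. j \<in> UNIV \<and> x \<in> X interior_of W j \<and> p x = Max ((\<lambda>a. a x) ` FF j)"
      if x: "x \<in> topspace X" for x
    proof -
      obtain j where "x \<in> X interior_of W j" using in_W[OF x] ..
      then show ?thesis using p_eq[OF int_W] by blast
    qed
  qed
  show "\<exists>G'. finite G' \<and> G' \<noteq> {} \<and> G' \<subseteq> F \<and> (\<forall>x\<in>L. p x = Max ((\<lambda>a. a x) ` G'))"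
    if L: "compactin X L"
  proof -
    have "incseq (\<lambda>j. X interior_of W j)"
      by (intro monoI interior_of_mono monoD[OF W(1)])
    moreover have "L \<subseteq> (\<Union>j. X interior_of W j)"
      using compactin_subset_topspace[OF L] W(2) by (rule order_trans)
    ultimately obtain n where n: "L \<subseteq> X interior_of W n"
      using compactin_subset_incseq_openin[OF L, where U = "\<lambda>j. X interior_of W j"] by auto
    have "\<forall>x\<in>L. p x = Max ((\<lambda>a. a x) ` FF n)"
    proof
      fix x assume "x \<in> L"
      then show "p x = Max ((\<lambda>a. a x) ` FF n)" by (intro p_eq int_W subsetD[OF n])
    qed
    then show ?thesis using FF by (intro exI[of _ "FF n"] conjI)
  qed
qed

lemma proper_sup_representation_if_sup_hulls_compact:
  fixes X :: "'a topology" and \<A> :: "('a \<Rightarrow> real) set"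
  assumes sig: "sigma_compact_space X" and lc: "locally_compact_space X"
    and haus: "Hausdorff_space X"
    and cont: "\<And>a. a \<in> \<A> \<Longrightarrow> continuous_map X euclideanreal a"
    and smult: "\<And>c a. a \<in> \<A> \<Longrightarrow> (\<lambda>x. c * a x) \<in> \<A>"
    and one: "(\<lambda>x. 1) \<in> \<A>"
    and hulls: "\<And>K C. compactin X K \<Longrightarrow> 1 \<le> C \<Longrightarrow> compactin X (sup_hull X \<A> K C)"
  shows "\<exists>p F. (\<forall>x\<in>topspace X. p x \<ge> 0) \<and> continuous_map X euclideanreal p \<and>
              proper_fun X p \<and> F \<subseteq> \<A> \<and> symmetric_family F \<and> pointwise_sup X F p \<and>
              (\<forall>L. compactin X L \<longrightarrow>
                 (\<exists>G. finite G \<and> G \<noteq> {} \<and> G \<subseteq> F \<and>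
                      (\<forall>x\<in>L. p x = Max ((\<lambda>a. a x) ` G))))"
proof -
  obtain W where W: "\<And>n. compactin X (W n)"
      and W_step: "\<And>n. W n \<union> sup_hull X \<A> (W n) (real n + 2) \<subseteq> X interior_of W (Suc n)"
      and W_cover: "topspace X \<subseteq> (\<Union>n. X interior_of W n)"
    using compact_exhaustion[OF sig lc haus, of "\<lambda>n K. sup_hull X \<A> K (real n + 2)"] hulls
    by auto
  have int_W: "x \<in> W j" if "x \<in> X interior_of W j" for x j
    using that interior_of_subset by fast
  have "mono W"
    unfolding mono_iff_le_Suc using W_step int_W by blast
  define D where "D n = (topspace X - X interior_of W (Suc n)) \<inter> W (Suc (Suc n))" for n
  have D: "compactin X (D n)" for n
    unfolding D_def by (intro closed_Int_compactin W) auto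
  have "\<exists>G. finite G \<and> G \<subseteq> \<A> \<and> (\<forall>a\<in>G. \<forall>x\<in>W n. \<bar>a x\<bar> \<le> 1) \<and>
               (\<forall>x\<in>D n. \<exists>a\<in>G. real n < a x)" for n
  proof -
    have "D n \<inter> sup_hull X \<A> (W n) (real n + 2) = {}"
      using W_step[of n] by (auto simp: D_def)
    moreover have "0 \<le> real n + 2" "real n < real n + 2" by simp_all
    ultimately obtain G where "finite G" "G \<subseteq> \<A>" "\<And>a x. a \<in> G \<Longrightarrow> x \<in> W n \<Longrightarrow> \<bar>a x\<bar> \<le> 1"
        "\<And>x. x \<in> D n \<Longrightarrow> \<exists>a\<in>G. real n < a x"
      using finite_separating_family_outside_sup_hull[OF cont smult W D] by metis
    then show ?thesis by (intro exI[of _ G]) auto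
  qed
  then obtain G where G: "\<And>n. finite (G n)" "\<And>n. G n \<subseteq> \<A>"
      "\<And>n a x. a \<in> G n \<Longrightarrow> x \<in> W n \<Longrightarrow> \<bar>a x\<bar> \<le> 1"
      "\<And>n x. x \<in> D n \<Longrightarrow> \<exists>a\<in>G n. real n < a x"
    by metis
  define F where "F = sym_closure (insert (\<lambda>x. 1) (\<Union>n. G n))"
  define p where "p = (\<lambda>x. Sup ((\<lambda>a. a x) ` F))"
  have G_cont: "continuous_map X euclideanreal a" if "a \<in> G n" for a n
    using that G(2) cont by blast
  note rep = sup_of_exhausting_family[OF F_def p_def \<open>mono W\<close> W_cover]
  have p_sup: "pointwise_sup X F p"
    by (rule rep(1)) (simp_all add: G(1,3) G_cont)
  have p_cont: "continuous_map X euclideanreal p"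
    by (rule rep(2)) (simp_all add: G(1,3) G_cont)
  have p_local: "\<exists>G'. finite G' \<and> G' \<noteq> {} \<and> G' \<subseteq> F \<and> (\<forall>x\<in>L. p x = Max ((\<lambda>a. a x) ` G'))"
    if "compactin X L" for L
    by (rule rep(3)) (simp_all add: G(1,3) G_cont that)
  have "F \<subseteq> \<A>"
    unfolding F_def using one G(2) smult[of _ "-1"] by (intro sym_closure_subset) auto
  have le_p: "a x \<le> p x" if "a \<in> F" "x \<in> topspace X" for a x
    using p_sup that unfolding pointwise_sup_def by blast
  have large: "real n < p x" if x: "x \<in> topspace X" "x \<notin> W (Suc n)" for n x
  proof -
    define k where "k = (LEAST k. x \<in> X interior_of W k)"
    have k: "x \<in> X interior_of W k"
      unfolding k_def using subsetD[OF W_cover x(1)] by (auto intro: LeastI)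
    have "Suc n < k"
    proof (rule ccontr)
      assume "\<not> Suc n < k"
      then have "W k \<subseteq> W (Suc n)" using monoD[OF \<open>mono W\<close>] by simp
      then show False using k x(2) int_W by blast
    qed
    define m where "m = k - 2"
    have m: "k = Suc (Suc m)" "n \<le> m" using \<open>Suc n < k\<close> unfolding m_def by arith+
    have "Suc m < (LEAST k. x \<in> X interior_of W k)"
      using m(1) unfolding k_def[symmetric] by simp
    then have "x \<notin> X interior_of W (Suc m)" by (rule not_less_Least)
    then have "x \<in> D m" unfolding D_def using x(1) int_W[OF k] m(1) by simp
    then obtain a where "a \<in> G m" "real m < a x" using G(4) by blast
    moreover have "a \<in> F" using \<open>a \<in> G m\<close> by (auto simp: F_def sym_closure_def)
    ultimately show ?thesis using le_p[OF _ x(1)] m(2) by force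
  qed
  have "proper_fun X p"
    using p_cont W large by (intro proper_fun_if_large_off_compacts[of _ _ "\<lambda>n. W (Suc n)"])
  moreover have "0 \<le> p x" if "x \<in> topspace X" for x
    using le_p[of "\<lambda>x. 1" x] that by (simp add: F_def sym_closure_def)
  ultimately show ?thesis
    using p_sup p_cont p_local \<open>F \<subseteq> \<A>\<close> symmetric_family_sym_closure[of "insert (\<lambda>x. 1) (\<Union>n. G n)"]
    unfolding F_def[symmetric] by blast
qed

theorem mainTheorem1:
  fixes X :: "'a topology" and \<A> :: "('a \<Rightarrow> real) set"
  assumes "sigma_compact_space X" and "locally_compact_space X" and "Hausdorff_space X"
    and cont: "\<forall>a\<in>\<A>. continuous_map X euclideanreal a"
    and add: "\<forall>a\<in>\<A>. \<forall>b\<in>\<A>. (\<lambda>x. a x + b x) \<in> \<A>"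
    and smult: "\<forall>c::real. \<forall>a\<in>\<A>. (\<lambda>x. c * a x) \<in> \<A>"
    and const: "\<forall>c::real. (\<lambda>x. c) \<in> \<A>"
    and sep: "\<forall>x\<in>topspace X. \<forall>y\<in>topspace X. x \<noteq> y \<longrightarrow> (\<exists>a\<in>\<A>. a x \<noteq> a y)"
  shows
   "let
      c1 = (\<forall>K C. compactin X K \<and> C \<ge> (1::real) \<longrightarrow>
              compactin X {\<omega> \<in> topspace X. \<forall>a\<in>\<A>. a \<omega> \<le> C * sup_abs_on K a});
      c2 = (\<exists>p F. (\<forall>x\<in>topspace X. p x \<ge> 0) \<and> continuous_map X euclideanreal p \<and>
              proper_fun X p \<and> F \<subseteq> \<A> \<and> symmetric_family F \<and> pointwise_sup X F p);
      c3 = (\<exists>p F. (\<forall>x\<in>topspace X. p x \<ge> 0) \<and> proper_fun X p \<and>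
              (\<forall>K. compactin X K \<longrightarrow> (\<exists>B. \<forall>x\<in>K. \<bar>p x\<bar> \<le> B)) \<and>
              F \<subseteq> \<A> \<and> symmetric_family F \<and> pointwise_sup X F p)
    in (c1 \<longleftrightarrow> c2) \<and> (c2 \<longleftrightarrow> c3) \<and>
       (c1 \<longrightarrow>
          (\<exists>p F. (\<forall>x\<in>topspace X. p x \<ge> 0) \<and> continuous_map X euclideanreal p \<and>
              proper_fun X p \<and> F \<subseteq> \<A> \<and> symmetric_family F \<and> pointwise_sup X F p \<and>
              (\<forall>L. compactin X L \<longrightarrow>
                 (\<exists>G. finite G \<and> G \<noteq> {} \<and> G \<subseteq> F \<and>
                      (\<forall>x\<in>L. p x = Max ((\<lambda>a. a x) ` G))))))"
proof -
  have hull_eq: "{\<omega> \<in> topspace X. \<forall>a\<in>\<A>. a \<omega> \<le> C * sup_abs_on K a} = sup_hull X \<A> K C" for K C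
    by (simp add: sup_hull_def)
  have cycle: "(P1 \<longleftrightarrow> P2) \<and> (P2 \<longleftrightarrow> P3) \<and> (P1 \<longrightarrow> S)"
    if "P1 \<Longrightarrow> S" "S \<Longrightarrow> P2" "P2 \<Longrightarrow> P3" "P3 \<Longrightarrow> P1" for P1 P2 P3 S
    using that by blast
  have iii_imp_i: "compactin X (sup_hull X \<A> K C)"
    if h: "\<forall>x\<in>topspace X. p x \<ge> 0" "proper_fun X p" "\<forall>K. compactin X K \<longrightarrow> (\<exists>B. \<forall>x\<in>K. \<bar>p x\<bar> \<le> B)"
      "F \<subseteq> \<A>" "symmetric_family F" "pointwise_sup X F p" "compactin X K" "1 \<le> C" for p F K C
  proof -
    obtain B where "\<forall>x\<in>K. \<bar>p x\<bar> \<le> B" using h(3,7) by blast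
    then show ?thesis
      using h compactin_subset_topspace[OF h(7)]
      by (intro compactin_sup_hull[OF cont[rule_format]]) auto
  qed
  \<comment> \<open>The chain (i) to the strong form of (ii), to (ii), to (iii), and back to (i).\<close>
  show ?thesis
    unfolding Let_def hull_eq
    by (rule cycle)
      ((intro proper_sup_representation_if_sup_hulls_compact[OF assms(1-3)];
          use cont smult const in auto),
        blast,
        (elim exE conjE, intro exI conjI;
          (assumption | intro allI impI continuous_map_bounded_on_compactin; assumption)),
        (elim exE conjE, intro allI impI, elim conjE, rule iii_imp_i; assumption))
qed

end
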